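(* Let $\delta_j,\delta_k$ be coprime integers with $1<\delta_j<\delta_k$, and let $(x_k,x_j)$ be a B\'ezout couple for $(\delta_k,\delta_j)$ associated to $i=x_k\delta_k+x_j\delta_j$ with $i\le\delta_j$. Then $\big(\lfloor\delta_k/\delta_j\rfloor x_k+x_j,\ x_k\big)$ is a B\'ezout couple for $(\delta_j,\ \delta_k\bmod\delta_j)$.
   Context: For coprime positive integers $p,q$, a B\'ezout couple for $(p,q)$ associated to $i\in\{1,\ldots,\max\{p,q\}\}$ is a pair $(x,y)\in\mathbb Z^2$ with $xp+yq=i$ and either $0<y\le p$ (the $\lambda$-B\'ezout couple of $i$, unique) or $0<x\le q$ (the $\mu$-B\'ezout couple of $i$, unique). Note $\delta_k\bmod\delta_j\ge1$ is coprime to $\delta_j$. *)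

theory Defs
  imports Main
begin

definition bezout_couple :: "int \<Rightarrow> int \<Rightarrow> int \<Rightarrow> int \<Rightarrow> int \<Rightarrow> bool" where
  "bezout_couple p q i x y \<longleftrightarrow>
     p > 0 \<and> q > 0 \<and> coprime p q \<and> 1 \<le> i \<and> i \<le> max p q \<and>
     x * p + y * q = i \<and> ((0 < y \<and> y \<le> p) \<or> (0 < x \<and> x \<le> q))"

end

theory Submission
  imports Defs
begin

text \<open>Since \<open>\<delta>\<^sub>k = \<lfloor>\<delta>\<^sub>k/\<delta>\<^sub>j\<rfloor> \<delta>\<^sub>j + r\<close>, the new pair solves the equation for \<open>(\<delta>\<^sub>j, r)\<close>
  by regrouping. If the old couple is a \<open>\<mu>\<close>-couple (\<open>0 < x\<^sub>k \<le> \<delta>\<^sub>j\<close>) it is a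
  \<open>\<lambda>\<close>-couple for the new pair. If it is a \<open>\<lambda>\<close>-couple, then \<open>i \<le> \<delta>\<^sub>j\<close> forces
  \<open>-\<delta>\<^sub>j < x\<^sub>k \<le> 0\<close>, and this bound squeezes the new first coordinate into \<open>(0, r]\<close>,
  giving a \<open>\<mu>\<close>-couple.\<close>

lemma coprime_mod_pos:
  fixes a b :: int
  assumes "coprime a b" and "1 < a"
  shows "0 < b mod a"
proof -
  have "\<not> a dvd b"
    using assms by (auto simp: coprime_absorb_left)
  then have "b mod a \<noteq> 0"
    by (simp add: dvd_eq_mod_eq_0)
  moreover have "0 \<le> b mod a"
    using assms(2) by simp
  ultimately show ?thesis
    by simp
qed

lemma lambda_couple_first_bounds:
  fixes p q x y i :: int
  assumes "0 < p" and "x * p + y * q = i" and "1 \<le> i" and "i \<le> q"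
    and "0 < y" and "y \<le> p"
  shows "- q < x" and "x \<le> 0"
proof -
  have "y * q \<le> p * q" and "q \<le> y * q"
    using assms by (simp_all add: mult_right_mono)
  with assms(2,3) have "(- q) * p < x * p"
    by (simp only: mult_minus_left mult.commute[of q p])
  moreover from \<open>q \<le> y * q\<close> assms(2,4) have "x * p \<le> 0 * p"
    by simp
  ultimately show "- q < x" and "x \<le> 0"
    using assms(1) by (auto intro: mult_right_less_imp_less mult_right_le_imp_le)
qed

lemma first_in_range_of_neg_second:
  fixes p r x y i :: int
  assumes "0 < r" and "x * p + y * r = i" and "1 \<le> i" and "i \<le> p"
    and "- p < y" and "y \<le> 0"
  shows "0 < x" and "x \<le> r"
proof -
  have "0 < p"
    using assms(3,4) by simp
  have "y * r \<le> 0"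
    using assms(1,6) by (simp add: mult_nonpos_nonneg)
  with assms(2,3) have "0 * p < x * p"
    by simp
  with \<open>0 < p\<close> show "0 < x"
    by (auto intro: mult_right_less_imp_less)
  have "(- y) * r \<le> (p - 1) * r"
    using assms(1,5) by (intro mult_right_mono) auto
  with assms(1,2,4) have "x * p < (r + 1) * p"
    by (simp add: algebra_simps)
  with \<open>0 < p\<close> show "x \<le> r"
    by (auto dest: mult_right_less_imp_less)
qed

theorem lemma3p1:
  fixes dj dk xk xj i :: int
  assumes "coprime dj dk" and "1 < dj" and "dj < dk"
    and "bezout_couple dk dj i xk xj"
    and "i \<le> dj"
  shows "bezout_couple dj (dk mod dj) i ((dk div dj) * xk + xj) xk"
proof -
  define r where "r = dk mod dj"
  define x where "x = (dk div dj) * xk + xj"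
  have old: "xk * dk + xj * dj = i" "1 \<le> i"
    "(0 < xj \<and> xj \<le> dk) \<or> (0 < xk \<and> xk \<le> dj)"
    using assms(4) unfolding bezout_couple_def by auto
  have "0 < r" and "r < dj" and "coprime dj r"
    using assms(1,2) coprime_mod_pos unfolding r_def by auto
  have "x * dj + xk * r = xk * (dk div dj * dj + dk mod dj) + xj * dj"
    unfolding x_def r_def by algebra
  with old(1) have new_eq: "x * dj + xk * r = i"
    by simp
  have "(0 < xk \<and> xk \<le> dj) \<or> (0 < x \<and> x \<le> r)"
  proof (cases "0 < xk \<and> xk \<le> dj")
    case False
    with old(3) have "0 < xj" and "xj \<le> dk"
      by auto
    with assms(2,3) old(1,2) assms(5) have "- dj < xk" and "xk \<le> 0"
      using lambda_couple_first_bounds[of dk xk xj dj i] by auto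
    then show ?thesis
      using first_in_range_of_neg_second[OF \<open>0 < r\<close> new_eq old(2) assms(5)] by simp
  qed simp
  then show ?thesis
    unfolding bezout_couple_def r_def[symmetric] x_def[symmetric]
    using assms(2,5) \<open>0 < r\<close> \<open>r < dj\<close> \<open>coprime dj r\<close> new_eq old(2) by simp
qed

end
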